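(* Let $G$ be a directed graph with vertices $s,t$ and $k\ge1$. The set $U^k_{\mathrm{lr}}$ together with the relation $\preceq$ is a distributive lattice $L^*$, and for any $C_1=[X_1,\dots,X_k]$ and $C_2=[Y_1,\dots,Y_k]$ in $L^*$ its join and meet are given by $C_1\vee C_2=[S_{\max}(X_1\cup Y_1),\dots,S_{\max}(X_k\cup Y_k)]$ and $C_1\wedge C_2=[S_{\min}(X_1\cup Y_1),\dots,S_{\min}(X_k\cup Y_k)]$.
   Context: An $s$-$t$ cut of a directed graph $G$ is a set $X\subseteq E(G)$ such that removing $X$ leaves no directed $s$-$t$ path; $\Gamma_G(s,t)$ is the set of $s$-$t$ cuts of minimum cardinality $\lambda(G)$. Fix a maximum-size collection $\mathcal P$ of pairwise edge-disjoint directed $s$-$t$ paths (so $|\mathcal P|=\lambda(G)$ and each minimum $s$-$t$ cut contains exactly one edge of each path in $\mathcal P$). For $X,Y\in\Gamma_G(s,t)$, $S_{\min}(X\cup Y)$ (resp. $S_{\max}(X\cup Y)$) is the set consisting, for each $p\in\mathcal P$, of the edge of $(X\cup Y)\cap p$ occurring first (resp. last) along $p$. For $s$-$t$ cuts $X,Y$, $X\le Y$ means every directed $s$-$t$ path in $G$ meets an edge of $X$ at or before an edge of $Y$. $U^k_{\mathrm{lr}}$ is the set of $k$-tuples $[X_1,\dots,X_k]$ of elements of $\Gamma_G(s,t)$ with $X_i\le X_j$ for all $i<j$; for $C_1=[X_i]_i,C_2=[Y_i]_i\in U^k_{\mathrm{lr}}$, $C_1\preceq C_2$ iff $X_i\le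 Y_i$ for all $i\in\{1,\dots,k\}$. *)

theory Defs
  imports "Graph_Theory.Digraph" "Graph_Theory.Arc_Walk" "HOL-Algebra.Lattice"
begin

text \<open>Directed (multi)graphs are represented by the Graph_Theory record pre_digraph
  (vertices, arcs, tail, head); directed s-t paths are pre_digraph.apath
  (arc lists forming a walk with pairwise distinct vertices).\<close>

definition st_cut :: "('v,'e) pre_digraph \<Rightarrow> 'v \<Rightarrow> 'v \<Rightarrow> 'e set \<Rightarrow> bool" where
  "st_cut G s t X \<equiv> X \<subseteq> arcs G \<and> (\<forall>p. pre_digraph.apath G s p t \<longrightarrow> set p \<inter> X \<noteq> {})"

definition min_cut_size :: "('v,'e) pre_digraph \<Rightarrow> 'v \<Rightarrow> 'v \<Rightarrow> nat" where
  "min_cut_size G s t = Min (card ` {X. st_cut G s t X})"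

definition min_cuts :: "('v,'e) pre_digraph \<Rightarrow> 'v \<Rightarrow> 'v \<Rightarrow> 'e set set" where
  "min_cuts G s t = {X. st_cut G s t X \<and> card X = min_cut_size G s t}"

definition edge_disjoint_paths :: "('v,'e) pre_digraph \<Rightarrow> 'v \<Rightarrow> 'v \<Rightarrow> 'e list set \<Rightarrow> bool" where
  "edge_disjoint_paths G s t P \<equiv>
     (\<forall>p\<in>P. pre_digraph.apath G s p t) \<and> (\<forall>p\<in>P. \<forall>q\<in>P. p \<noteq> q \<longrightarrow> set p \<inter> set q = {})"

definition max_edge_disjoint_paths :: "('v,'e) pre_digraph \<Rightarrow> 'v \<Rightarrow> 'v \<Rightarrow> 'e list set \<Rightarrow> bool" where
  "max_edge_disjoint_paths G s t P \<equiv> finite P \<and> edge_disjoint_paths G s t P \<and>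
     (\<forall>Q. finite Q \<and> edge_disjoint_paths G s t Q \<longrightarrow> card Q \<le> card P)"

definition first_on :: "'e list \<Rightarrow> 'e set \<Rightarrow> 'e" where
  "first_on p A = p ! (LEAST i. i < length p \<and> p ! i \<in> A)"

definition last_on :: "'e list \<Rightarrow> 'e set \<Rightarrow> 'e" where
  "last_on p A = p ! (GREATEST i. i < length p \<and> p ! i \<in> A)"

definition S_min :: "'e list set \<Rightarrow> 'e set \<Rightarrow> 'e set" where
  "S_min P A = (\<lambda>p. first_on p A) ` P"

definition S_max :: "'e list set \<Rightarrow> 'e set \<Rightarrow> 'e set" where
  "S_max P A = (\<lambda>p. last_on p A) ` P"

definition cut_le :: "('v,'e) pre_digraph \<Rightarrow> 'v \<Rightarrow> 'v \<Rightarrow> 'e set \<Rightarrow> 'e set \<Rightarrow> bool" where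
  "cut_le G s t X Y \<equiv> \<forall>p. pre_digraph.apath G s p t \<longrightarrow>
     (LEAST i. i < length p \<and> p ! i \<in> X) \<le> (LEAST j. j < length p \<and> p ! j \<in> Y)"

definition U_lr :: "('v,'e) pre_digraph \<Rightarrow> 'v \<Rightarrow> 'v \<Rightarrow> nat \<Rightarrow> 'e set list set" where
  "U_lr G s t k = {C. length C = k \<and> set C \<subseteq> min_cuts G s t \<and>
     (\<forall>i j. i < j \<and> j < k \<longrightarrow> cut_le G s t (C ! i) (C ! j))}"

definition tuple_le :: "('v,'e) pre_digraph \<Rightarrow> 'v \<Rightarrow> 'v \<Rightarrow> nat \<Rightarrow> 'e set list \<Rightarrow> 'e set list \<Rightarrow> bool" where
  "tuple_le G s t k C1 C2 \<equiv> (\<forall>i < k. cut_le G s t (C1 ! i) (C2 ! i))"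

definition L_star :: "('v,'e) pre_digraph \<Rightarrow> 'v \<Rightarrow> 'v \<Rightarrow> nat \<Rightarrow> 'e set list gorder" where
  "L_star G s t k = \<lparr> carrier = U_lr G s t k, eq = (=), le = tuple_le G s t k \<rparr>"

definition distributive_lattice :: "('a, 'b) gorder_scheme \<Rightarrow> bool" where
  "distributive_lattice L \<equiv> lattice L \<and>
     (\<forall>x\<in>carrier L. \<forall>y\<in>carrier L. \<forall>z\<in>carrier L.
        x \<sqinter>\<^bsub>L\<^esub> (y \<squnion>\<^bsub>L\<^esub> z) = (x \<sqinter>\<^bsub>L\<^esub> y) \<squnion>\<^bsub>L\<^esub> (x \<sqinter>\<^bsub>L\<^esub> z))"

end

theory Submission
  imports Defs
begin

text \<open>
  By Menger's theorem, proved here by flow augmentation, a minimum s-t cut contains exactly one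
  arc of each path of the maximum packing P; it is therefore determined by the positions of these
  arcs along the paths, and for minimum cuts X \<le> Y holds exactly when X comes no later than Y on
  every path of P. The key fact is that choosing on every path the later (resp. earlier) of the
  arcs of two minimum cuts X, Y again gives a cut, namely S_max (resp. S_min) of X \<union> Y: an s-t
  path avoiding it would have to leave the set of vertices reachable from s (resp. reaching t)
  by a walk avoiding X or avoiding Y, which is impossible. So U^k_lr is a set of position vectors
  ordered componentwise and closed under componentwise max and min, which are the join and meet
  given by S_max and S_min; distributivity is that of max and min.
\<close>

section \<open>Arc balance and flows\<close>

definition arc_balance :: "('v,'e) pre_digraph \<Rightarrow> 'e set \<Rightarrow> 'v \<Rightarrow> int" where
  "arc_balance H F v = (\<Sum>e\<in>F. of_bool (tail H e = v) - of_bool (head H e = v))"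

lemma arc_balance_Un:
  "finite A \<Longrightarrow> finite B \<Longrightarrow> A \<inter> B = {} \<Longrightarrow>
    arc_balance H (A \<union> B) v = arc_balance H A v + arc_balance H B v"
  by (simp add: arc_balance_def sum.union_disjoint)

lemma arc_balance_Diff:
  "finite A \<Longrightarrow> B \<subseteq> A \<Longrightarrow> arc_balance H (A - B) v = arc_balance H A v - arc_balance H B v"
  by (simp add: arc_balance_def sum_diff)

lemma sum_arc_balance:
  "finite S \<Longrightarrow>
    (\<Sum>v\<in>S. arc_balance H F v) = (\<Sum>e\<in>F. of_bool (tail H e \<in> S) - of_bool (head H e \<in> S))"
  unfolding arc_balance_def by (subst sum.swap) (simp add: sum_subtractf of_bool_def)

lemma (in pre_digraph) arc_balance_trail:
  "cas u p w \<Longrightarrow> distinct p \<Longrightarrow> arc_balance G (set p) v = of_bool (v = u) - of_bool (v = w)"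
  by (induction p arbitrary: u) (auto simp: arc_balance_def)

lemma (in pre_digraph) cas_leaves_set:
  "cas u p w \<Longrightarrow> u \<in> S \<Longrightarrow> w \<notin> S \<Longrightarrow> \<exists>e\<in>set p. tail G e \<in> S \<and> head G e \<notin> S"
  by (induction p arbitrary: u) auto

lemma (in wf_digraph) apath_distinct_arcs: "apath u p v \<Longrightarrow> distinct p"
  by (auto simp: apath_def intro: distinct_verts_imp_distinct)

lemma (in wf_digraph) arc_balance_apath:
  assumes "apath u p w"
  shows "arc_balance G (set p) v = of_bool (v = u) - of_bool (v = w)"
  using arc_balance_trail[of u p w v] apath_distinct_arcs[OF assms] assms
  by (simp add: apath_def awalk_def)

lemma (in wf_digraph) awalk_contains_apath:
  assumes "awalk u w v"
  obtains p where "apath u p v" "set p \<subseteq> set w"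
  using assms apath_awalk_to_apath awalk_to_apath_subset by blast

lemma (in wf_digraph) awalk_split_at_arc:
  assumes "awalk u p v" "i < length p"
  shows "awalk u (take (Suc i) p) (head G (p ! i))"
    and "awalk (tail G (p ! i)) (drop i p) v"
    and "awalk (head G (p ! i)) (drop (Suc i) p) v"
proof -
  have "awalk u (take i p @ p ! i # drop (Suc i) p) v"
    using assms by (simp add: id_take_nth_drop[symmetric])
  then have before: "awalk u (take i p) (tail G (p ! i))" and arc: "p ! i \<in> arcs G"
    and after: "awalk (head G (p ! i)) (drop (Suc i) p) v"
    by (auto simp: awalk_Cons_iff)
  show "awalk u (take (Suc i) p) (head G (p ! i))"
    using awalk_appendI[OF before arc_implies_awalk[OF arc]] assms(2)
    by (simp add: take_Suc_conv_app_nth)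
  show "awalk (tail G (p ! i)) (drop i p) v"
    using arc after assms(2) by (simp add: Cons_nth_drop_Suc[symmetric] awalk_Cons_iff)
  show "awalk (head G (p ! i)) (drop (Suc i) p) v"
    by (rule after)
qed

locale st_digraph = fin_digraph G for G :: "('v,'e) pre_digraph" +
  fixes s t :: 'v
  assumes source_in_verts: "s \<in> verts G" and sink_in_verts: "t \<in> verts G"
    and source_neq_sink: "s \<noteq> t"
begin

lemma st_cut_meets_awalk:
  assumes "st_cut G s t X" "awalk s w t"
  shows "set w \<inter> X \<noteq> {}"
proof -
  obtain p where "apath s p t" "set p \<subseteq> set w"
    using assms(2) by (rule awalk_contains_apath)
  then show ?thesis
    using assms(1) unfolding st_cut_def by blast
qed

lemma st_cut_finite: "st_cut G s t X \<Longrightarrow> finite X"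
  by (auto simp: st_cut_def intro: finite_subset[OF _ finite_arcs])

lemma st_apath_non_Nil: "apath s p t \<Longrightarrow> p \<noteq> []"
  using source_neq_sink by (auto simp: apath_Nil_iff)

lemma cut_meets_paths:
  assumes "edge_disjoint_paths G s t Q" "st_cut G s t X"
  obtains f where "inj_on f Q" "\<And>p. p \<in> Q \<Longrightarrow> f p \<in> set p \<inter> X"
proof -
  have "\<forall>p\<in>Q. \<exists>e. e \<in> set p \<inter> X"
    using assms by (auto simp: edge_disjoint_paths_def st_cut_def)
  then obtain f where f: "\<And>p. p \<in> Q \<Longrightarrow> f p \<in> set p \<inter> X"
    by metis
  moreover have "inj_on f Q"
    using assms(1) f by (fastforce simp: edge_disjoint_paths_def intro: inj_onI)
  ultimately show thesis
    using that by blast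
qed

lemma card_le_card_st_cut:
  assumes "edge_disjoint_paths G s t Q" "st_cut G s t X"
  shows "card Q \<le> card X"
proof -
  obtain f where inj: "inj_on f Q" and f: "\<And>p. p \<in> Q \<Longrightarrow> f p \<in> set p \<inter> X"
    using cut_meets_paths[OF assms] by blast
  have "f ` Q \<subseteq> X"
    using f by blast
  moreover have "finite X"
    using assms(2) by (rule st_cut_finite)
  ultimately show ?thesis
    by (rule card_inj_on_le[OF inj])
qed

definition st_flow :: "'e set \<Rightarrow> int \<Rightarrow> bool" where
  "st_flow F k \<longleftrightarrow> F \<subseteq> arcs G \<and>
    (\<forall>v. arc_balance G F v = k * (of_bool (v = s) - of_bool (v = t)))"

lemma st_flow_finite: "st_flow F k \<Longrightarrow> finite F"
  by (auto simp: st_flow_def intro: finite_subset[OF _ finite_arcs])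

lemma st_flow_value:
  assumes "st_flow F k" "finite S" "s \<in> S" "t \<notin> S"
  shows "(\<Sum>v\<in>S. arc_balance G F v) = k"
  using assms by (simp add: st_flow_def sum_distrib_left[symmetric] sum_subtractf of_bool_def)

lemma st_flow_Union_paths:
  assumes "finite Q" "edge_disjoint_paths G s t Q"
  shows "st_flow (\<Union>p\<in>Q. set p) (int (card Q))"
  unfolding st_flow_def
proof (intro conjI allI)
  have paths: "\<And>p. p \<in> Q \<Longrightarrow> apath s p t"
    using assms(2) by (simp add: edge_disjoint_paths_def)
  then show "(\<Union>p\<in>Q. set p) \<subseteq> arcs G"
    by (auto simp: apath_def awalk_def)
  fix v
  have "arc_balance G (\<Union>p\<in>Q. set p) v = (\<Sum>p\<in>Q. arc_balance G (set p) v)"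
    using assms unfolding arc_balance_def edge_disjoint_paths_def by (subst sum.UNION_disjoint) auto
  also have "\<dots> = (\<Sum>p\<in>Q. of_bool (v = s) - of_bool (v = t))"
    using paths by (intro sum.cong) (auto simp: arc_balance_apath)
  finally show "arc_balance G (\<Union>p\<in>Q. set p) v = int (card Q) * (of_bool (v = s) - of_bool (v = t))"
    by simp
qed

lemma st_flow_Diff_apath:
  assumes "st_flow F (k + 1)" "apath s p t" "set p \<subseteq> F"
  shows "st_flow (F - set p) k"
  unfolding st_flow_def
proof (intro conjI allI)
  show "F - set p \<subseteq> arcs G"
    using assms(1) by (auto simp: st_flow_def)
  fix v
  have "arc_balance G (F - set p) v = arc_balance G F v - arc_balance G (set p) v"
    using st_flow_finite[OF assms(1)] assms(3) by (rule arc_balance_Diff)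
  also have "\<dots> = (k + 1) * (of_bool (v = s) - of_bool (v = t)) - (of_bool (v = s) - of_bool (v = t))"
    using assms(1,2) by (simp add: st_flow_def arc_balance_apath)
  finally show "arc_balance G (F - set p) v = k * (of_bool (v = s) - of_bool (v = t))"
    by (simp add: algebra_simps)
qed

text \<open>If no path inside F led from s to t, the vertices reachable within F would
  form a set that no arc of F leaves but whose net outflow is the positive value of F.\<close>
lemma st_flow_has_apath:
  assumes "st_flow F k" "k > 0"
  obtains p where "apath s p t" "set p \<subseteq> F"
proof -
  define R where "R = {v. \<exists>w. awalk s w v \<and> set w \<subseteq> F}"
  have closed: "head G e \<in> R" if e: "e \<in> F" "tail G e \<in> R" for e
  proof -
    obtain w where "awalk s w (tail G e)" "set w \<subseteq> F"
      using e(2) by (auto simp: R_def)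
    moreover have "e \<in> arcs G"
      using assms(1) e(1) by (auto simp: st_flow_def)
    ultimately show ?thesis
      using e(1) unfolding R_def by (auto intro!: exI[of _ "w @ [e]"] awalk_appendI arc_implies_awalk)
  qed
  have "t \<in> R"
  proof (rule ccontr)
    assume "t \<notin> R"
    moreover have "s \<in> R"
      using source_in_verts by (auto simp: R_def awalk_Nil_iff intro!: exI[of _ "[]"])
    moreover have "finite R"
      using finite_verts by (rule rev_finite_subset) (auto simp: R_def)
    ultimately have "(\<Sum>v\<in>R. arc_balance G F v) = k"
      using st_flow_value[OF assms(1)] by blast
    moreover have "(\<Sum>v\<in>R. arc_balance G F v) \<le> 0"
      using \<open>finite R\<close> closed by (auto simp: sum_arc_balance intro: sum_nonpos)
    ultimately show False
      using assms(2) by simp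
  qed
  then obtain w where w: "awalk s w t" "set w \<subseteq> F"
    by (auto simp: R_def)
  obtain p where p: "apath s p t" "set p \<subseteq> set w"
    using w(1) by (rule awalk_contains_apath)
  show thesis
    using p w(2) by (intro that[of p]) auto
qed

lemma st_flow_decompose:
  assumes "st_flow F (int n)"
  shows "\<exists>Q. finite Q \<and> card Q = n \<and> edge_disjoint_paths G s t Q \<and> (\<Union>q\<in>Q. set q) \<subseteq> F"
  using assms
proof (induction n arbitrary: F)
  case 0
  show ?case
    by (auto simp: edge_disjoint_paths_def intro: exI[of _ "{}"])
next
  case (Suc n)
  obtain p where p: "apath s p t" "set p \<subseteq> F"
    using Suc.prems by (auto elim: st_flow_has_apath)
  have "st_flow (F - set p) (int n)"
    using Suc.prems p by (intro st_flow_Diff_apath) (simp_all add: add.commute)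
  then obtain Q where Q: "finite Q" "card Q = n" "edge_disjoint_paths G s t Q"
    "(\<Union>q\<in>Q. set q) \<subseteq> F - set p"
    using Suc.IH by blast
  have "p \<notin> Q"
  proof
    assume "p \<in> Q"
    then have "set p \<subseteq> F - set p"
      using Q(4) by blast
    then have "p = []"
      by (metis Diff_iff in_mono list.set_intros(1) neq_Nil_conv)
    then show False
      using st_apath_non_Nil[OF p(1)] by simp
  qed
  have "set p \<inter> set q = {}" if "q \<in> Q" for q
    using that Q(4) by blast
  then have "edge_disjoint_paths G s t (insert p Q)"
    using Q(3) p(1) unfolding edge_disjoint_paths_def by blast
  then show ?case
    using Q p \<open>p \<notin> Q\<close> by (intro exI[of _ "insert p Q"]) auto
qed

lemma st_cut_leaving_arcs:
  assumes "s \<in> S" "t \<notin> S"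
  shows "st_cut G s t {e \<in> arcs G. tail G e \<in> S \<and> head G e \<notin> S}"
  unfolding st_cut_def
proof (intro conjI allI impI)
  fix p assume "apath s p t"
  then have "cas s p t" "set p \<subseteq> arcs G"
    by (auto simp: apath_def awalk_def)
  then show "set p \<inter> {e \<in> arcs G. tail G e \<in> S \<and> head G e \<notin> S} \<noteq> {}"
    using cas_leaves_set[of s p t S] assms by auto
qed auto

lemma st_flow_value_saturated:
  assumes flow: "st_flow F k" and S: "finite S" "s \<in> S" "t \<notin> S"
    and leaving: "\<And>e. e \<in> arcs G \<Longrightarrow> tail G e \<in> S \<Longrightarrow> head G e \<notin> S \<Longrightarrow> e \<in> F"
    and entering: "\<And>e. e \<in> F \<Longrightarrow> head G e \<in> S \<Longrightarrow> tail G e \<in> S"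
  shows "k = int (card {e \<in> arcs G. tail G e \<in> S \<and> head G e \<notin> S})"
proof -
  let ?C = "{e \<in> arcs G. tail G e \<in> S \<and> head G e \<notin> S}"
  have "k = (\<Sum>e\<in>F. of_bool (tail G e \<in> S) - of_bool (head G e \<in> S))"
    unfolding st_flow_value[OF flow S, symmetric] by (rule sum_arc_balance[OF S(1)])
  also have "\<dots> = (\<Sum>e\<in>F. of_bool (e \<in> ?C))"
    using entering flow by (intro sum.cong) (auto simp: st_flow_def of_bool_def)
  also have "\<dots> = int (card ?C)"
  proof -
    have "?C \<subseteq> F"
      using leaving by blast
    then show ?thesis
      using st_flow_finite[OF flow] by (simp add: Int_absorb1)
  qed
  finally show ?thesis .
qed

section \<open>Augmenting paths and Menger's theorem\<close>

definition residual :: "'e set \<Rightarrow> ('v, 'e \<times> bool) pre_digraph" where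
  "residual F = \<lparr>verts = verts G, arcs = (arcs G - F) \<times> {True} \<union> F \<times> {False},
     tail = (\<lambda>(e, fwd). if fwd then tail G e else head G e),
     head = (\<lambda>(e, fwd). if fwd then head G e else tail G e)\<rparr>"

lemma residual_simps [simp]:
  "verts (residual F) = verts G"
  "arcs (residual F) = (arcs G - F) \<times> {True} \<union> F \<times> {False}"
  "tail (residual F) (e, True) = tail G e" "head (residual F) (e, True) = head G e"
  "tail (residual F) (e, False) = head G e" "head (residual F) (e, False) = tail G e"
  by (simp_all add: residual_def)

lemma wf_digraph_residual: "F \<subseteq> arcs G \<Longrightarrow> wf_digraph (residual F)"
  by unfold_locales auto

lemma arc_balance_residual:
  assumes "finite A" "finite B"
  shows "arc_balance (residual F) (A \<times> {True} \<union> B \<times> {False}) v = arc_balance G A v - arc_balance G B v"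
proof -
  have "A \<times> {True} = (\<lambda>e. (e, True)) ` A" "B \<times> {False} = (\<lambda>e. (e, False)) ` B"
    by auto
  then have "arc_balance (residual F) (A \<times> {True}) v = arc_balance G A v"
    and "arc_balance (residual F) (B \<times> {False}) v = - arc_balance G B v"
    unfolding arc_balance_def
    by (simp_all add: sum.reindex inj_on_def flip: sum_negf)
  moreover have "arc_balance (residual F) (A \<times> {True} \<union> B \<times> {False}) v =
      arc_balance (residual F) (A \<times> {True}) v + arc_balance (residual F) (B \<times> {False}) v"
    using assms by (intro arc_balance_Un) auto
  ultimately show ?thesis
    by simp
qed

lemma st_flow_augment:
  assumes flow: "st_flow F k" and r: "pre_digraph.apath (residual F) s r t"
  shows "st_flow (F - {e. (e, False) \<in> set r} \<union> {e. (e, True) \<in> set r}) (k + 1)"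
proof -
  define A B where "A = {e. (e, True) \<in> set r}" and "B = {e. (e, False) \<in> set r}"
  have F: "F \<subseteq> arcs G" "finite F"
    using flow st_flow_finite by (auto simp: st_flow_def)
  interpret residual: wf_digraph "residual F"
    using F(1) by (rule wf_digraph_residual)
  have "set r \<subseteq> arcs (residual F)"
    using r by (auto simp: residual.apath_def residual.awalk_def)
  then have AB: "A \<subseteq> arcs G - F" "B \<subseteq> F"
    by (auto simp: A_def B_def)
  then have fin: "finite A" "finite B"
    using F by (auto intro: finite_subset[OF _ finite_arcs])
  have "set r = A \<times> {True} \<union> B \<times> {False}"
  proof (intro equalityI subsetI)
    fix x assume "x \<in> set r"
    moreover obtain e fwd where "x = (e, fwd)"
      by (cases x)
    ultimately show "x \<in> A \<times> {True} \<union> B \<times> {False}"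
      by (cases fwd) (auto simp: A_def B_def)
  qed (auto simp: A_def B_def)
  then have path: "arc_balance G A v - arc_balance G B v = of_bool (v = s) - of_bool (v = t)" for v
    using residual.arc_balance_apath[OF r] arc_balance_residual[OF fin] by simp
  show ?thesis
    unfolding st_flow_def A_def[symmetric] B_def[symmetric]
  proof (intro conjI allI)
    show "F - B \<union> A \<subseteq> arcs G"
      using F AB by auto
    fix v
    have "arc_balance G (F - B \<union> A) v = arc_balance G (F - B) v + arc_balance G A v"
      using F AB fin by (intro arc_balance_Un) auto
    also have "\<dots> = arc_balance G F v - arc_balance G B v + arc_balance G A v"
      using F(2) AB(2) by (simp add: arc_balance_Diff)
    also have "\<dots> = k * (of_bool (v = s) - of_bool (v = t)) + (of_bool (v = s) - of_bool (v = t))"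
      using flow path[of v] by (simp add: st_flow_def)
    finally show "arc_balance G (F - B \<union> A) v = (k + 1) * (of_bool (v = s) - of_bool (v = t))"
      by (simp add: algebra_simps)
  qed
qed

end

locale max_st_paths = st_digraph G s t for G :: "('v,'e) pre_digraph" and s t +
  fixes P :: "'e list set"
  assumes max_paths: "max_edge_disjoint_paths G s t P"
begin

lemma finite_paths: "finite P"
  and paths_edge_disjoint: "edge_disjoint_paths G s t P"
  and path_apath: "p \<in> P \<Longrightarrow> apath s p t"
  using max_paths by (auto simp: max_edge_disjoint_paths_def edge_disjoint_paths_def)

lemma flow_of_paths: "st_flow (\<Union>p\<in>P. set p) (int (card P))"
  using finite_paths paths_edge_disjoint by (rule st_flow_Union_paths)

lemma no_augmenting_awalk: "\<not> pre_digraph.awalk (residual (\<Union>p\<in>P. set p)) s r t"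
proof
  let ?F = "\<Union>p\<in>P. set p"
  interpret residual: wf_digraph "residual ?F"
    using flow_of_paths by (auto simp: st_flow_def intro: wf_digraph_residual)
  assume "residual.awalk s r t"
  then obtain r' where "residual.apath s r' t"
    by (rule residual.awalk_contains_apath)
  then have "st_flow (?F - {e. (e, False) \<in> set r'} \<union> {e. (e, True) \<in> set r'}) (int (card P) + 1)"
    by (rule st_flow_augment[OF flow_of_paths])
  then have "st_flow (?F - {e. (e, False) \<in> set r'} \<union> {e. (e, True) \<in> set r'}) (int (Suc (card P)))"
    by (simp add: add.commute)
  then obtain Q where "finite Q" "card Q = Suc (card P)" "edge_disjoint_paths G s t Q"
    using st_flow_decompose by blast
  then show False
    using max_paths by (auto simp: max_edge_disjoint_paths_def)
qed

text \<open>The arcs leaving the set S of vertices reachable from s in the residual graph of the flow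
  given by P all carry flow, and no arc of the flow enters S.\<close>
lemma exists_st_cut_card_eq: "\<exists>C. st_cut G s t C \<and> card C = card P"
proof -
  define F where "F = (\<Union>p\<in>P. set p)"
  have flow: "st_flow F (int (card P))"
    unfolding F_def by (rule flow_of_paths)
  interpret residual: wf_digraph "residual F"
    using flow by (auto simp: st_flow_def intro: wf_digraph_residual)
  define S where "S = {v. \<exists>w. residual.awalk s w v}"
  have closed: "head (residual F) x \<in> S" if x: "x \<in> arcs (residual F)" "tail (residual F) x \<in> S" for x
  proof -
    obtain w where "residual.awalk s w (tail (residual F) x)"
      using x(2) by (auto simp: S_def)
    then have "residual.awalk s (w @ [x]) (head (residual F) x)"
      using residual.arc_implies_awalk[OF x(1)] by (rule residual.awalk_appendI)
    then show ?thesis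
      unfolding S_def by blast
  qed
  have "finite S"
    using finite_verts by (rule rev_finite_subset) (auto simp: S_def dest: residual.awalk_last_in_verts)
  moreover have "s \<in> S"
    using source_in_verts by (auto simp: S_def residual.awalk_Nil_iff intro!: exI[of _ "[]"])
  moreover have "t \<notin> S"
    using no_augmenting_awalk by (auto simp: S_def F_def)
  moreover have "e \<in> F" if "e \<in> arcs G" "tail G e \<in> S" "head G e \<notin> S" for e
    using closed[of "(e, True)"] that by auto
  moreover have "tail G e \<in> S" if "e \<in> F" "head G e \<in> S" for e
    using closed[of "(e, False)"] that by simp
  ultimately have "int (card P) = int (card {e \<in> arcs G. tail G e \<in> S \<and> head G e \<notin> S})"
    by (rule st_flow_value_saturated[OF flow])
  then show ?thesis
    using st_cut_leaving_arcs[OF \<open>s \<in> S\<close> \<open>t \<notin> S\<close>] by auto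
qed

lemma min_cut_size_eq_card: "min_cut_size G s t = card P"
proof -
  obtain C where C: "st_cut G s t C" "card C = card P"
    using exists_st_cut_card_eq by blast
  have "finite {X. st_cut G s t X}"
    by (rule finite_subset[of _ "Pow (arcs G)"]) (auto simp: st_cut_def)
  moreover have "card P \<in> card ` {X. st_cut G s t X}"
    using C by (metis (mono_tags) image_eqI mem_Collect_eq)
  ultimately show ?thesis
    unfolding min_cut_size_def using card_le_card_st_cut[OF paths_edge_disjoint]
    by (intro Min_eqI) auto
qed

lemma min_cuts_iff: "X \<in> min_cuts G s t \<longleftrightarrow> st_cut G s t X \<and> card X = card P"
  by (simp add: min_cuts_def min_cut_size_eq_card)

end

section \<open>Minimum cuts along a maximum packing of paths\<close>

text \<open>As in cut_le, positions are taken with LEAST, so first_index p X = 0 if p misses X.\<close>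
definition first_index :: "'a list \<Rightarrow> 'a set \<Rightarrow> nat" where
  "first_index p X = (LEAST i. i < length p \<and> p ! i \<in> X)"

lemma first_index_le: "i < length p \<Longrightarrow> p ! i \<in> X \<Longrightarrow> first_index p X \<le> i"
  unfolding first_index_def by (rule Least_le) simp

lemma first_index_mem:
  assumes "set p \<inter> X \<noteq> {}"
  shows "first_index p X < length p" "p ! first_index p X \<in> X"
proof -
  have "\<exists>i. i < length p \<and> p ! i \<in> X"
    using assms by (auto simp: in_set_conv_nth)
  then have "first_index p X < length p \<and> p ! first_index p X \<in> X"
    unfolding first_index_def by (rule LeastI_ex)
  then show "first_index p X < length p" "p ! first_index p X \<in> X"
    by simp_all
qed

lemma set_take_first_index_disjoint:
  assumes "n \<le> first_index p X"
  shows "set (take n p) \<inter> X = {}"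
proof -
  have "p ! i \<notin> X" if "i < n" "i < length p" for i
    using first_index_le[OF that(2), of X] assms that(1) by auto
  then show ?thesis
    by (auto simp: in_set_conv_nth)
qed

context max_st_paths
begin

lemma min_cut_choice:
  assumes "X \<in> min_cuts G s t"
  obtains f where "X = f ` P" "\<And>p. p \<in> P \<Longrightarrow> f p \<in> set p"
proof -
  have cut: "st_cut G s t X" and card: "card X = card P"
    using assms by (simp_all add: min_cuts_iff)
  obtain f where inj: "inj_on f P" and f: "\<And>p. p \<in> P \<Longrightarrow> f p \<in> set p \<inter> X"
    using cut_meets_paths[OF paths_edge_disjoint cut] by blast
  have "finite X"
    using cut by (rule st_cut_finite)
  moreover have "f ` P \<subseteq> X"
    using f by blast
  moreover have "card (f ` P) = card X"
    using inj card by (simp add: card_image)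
  ultimately have "f ` P = X"
    by (rule card_subset_eq)
  then show thesis
    using f by (intro that[of f]) auto
qed

lemma min_cut_Int_path:
  assumes "X \<in> min_cuts G s t" "p \<in> P"
  shows "\<exists>e. X \<inter> set p = {e}"
proof -
  obtain f where X: "X = f ` P" and f: "\<And>p. p \<in> P \<Longrightarrow> f p \<in> set p"
    using min_cut_choice[OF assms(1)] by blast
  have "X \<inter> set p = {f p}"
  proof (intro equalityI subsetI)
    fix e assume "e \<in> X \<inter> set p"
    then obtain q where "q \<in> P" "e = f q" "e \<in> set p"
      using X by blast
    moreover from this have "q = p"
      using f assms(2) paths_edge_disjoint unfolding edge_disjoint_paths_def by blast
    ultimately show "e \<in> {f p}"
      by simp
  qed (use X f assms(2) in auto)
  then show ?thesis
    by blast
qed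

lemma first_index_min_cut:
  assumes "X \<in> min_cuts G s t" "p \<in> P"
  shows "first_index p X < length p"
    and "\<And>i. i < length p \<Longrightarrow> p ! i \<in> X \<longleftrightarrow> i = first_index p X"
proof -
  obtain e where e: "X \<inter> set p = {e}"
    using min_cut_Int_path[OF assms] by blast
  then have "e \<in> set p"
    by blast
  then obtain j where j: "j < length p" "p ! j = e"
    by (metis in_set_conv_nth)
  have "distinct p"
    using path_apath[OF assms(2)] by (rule apath_distinct_arcs)
  have iff: "p ! i \<in> X \<longleftrightarrow> i = j" if i: "i < length p" for i
  proof
    assume "p ! i \<in> X"
    then have "p ! i = p ! j"
      using e j nth_mem[OF i] by blast
    then show "i = j"
      using \<open>distinct p\<close> i j(1) by (simp add: nth_eq_iff_index_eq)
  qed (use e j in blast)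
  have "first_index p X = j"
    unfolding first_index_def by (rule Least_equality) (use iff j in auto)
  then show "first_index p X < length p" "\<And>i. i < length p \<Longrightarrow> p ! i \<in> X \<longleftrightarrow> i = first_index p X"
    using iff j by auto
qed

lemma min_cut_eq_image:
  assumes "X \<in> min_cuts G s t"
  shows "X = (\<lambda>p. p ! first_index p X) ` P"
proof -
  obtain f where X: "X = f ` P" and f: "\<And>p. p \<in> P \<Longrightarrow> f p \<in> set p"
    using min_cut_choice[OF assms] by blast
  have "f p = p ! first_index p X" if p: "p \<in> P" for p
  proof -
    obtain i where "i < length p" "f p = p ! i"
      using f[OF p] by (metis in_set_conv_nth)
    moreover have "f p \<in> X"
      using X p by blast
    ultimately show ?thesis
      using first_index_min_cut(2)[OF assms p] by auto
  qed
  then have "f ` P = (\<lambda>p. p ! first_index p X) ` P"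
    by (simp cong: image_cong)
  then show ?thesis
    by (rule trans[OF X])
qed

lemma min_cut_memE:
  assumes "X \<in> min_cuts G s t" "e \<in> X"
  obtains p where "p \<in> P" "e = p ! first_index p X"
proof -
  have "e \<in> (\<lambda>p. p ! first_index p X) ` P"
    using assms(2) by (subst min_cut_eq_image[OF assms(1), symmetric])
  then show thesis
    using that by blast
qed

lemma min_cuts_eqI:
  assumes "X \<in> min_cuts G s t" "Y \<in> min_cuts G s t"
    and "\<And>p. p \<in> P \<Longrightarrow> first_index p X = first_index p Y"
  shows "X = Y"
proof -
  have "X = (\<lambda>p. p ! first_index p X) ` P"
    by (rule min_cut_eq_image[OF assms(1)])
  also have "\<dots> = (\<lambda>p. p ! first_index p Y) ` P"
    using assms(3) by (simp cong: image_cong)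
  also have "\<dots> = Y"
    by (rule min_cut_eq_image[OF assms(2), symmetric])
  finally show ?thesis .
qed

lemma set_drop_first_index_disjoint:
  assumes "X \<in> min_cuts G s t" "p \<in> P" "first_index p X < n"
  shows "set (drop n p) \<inter> X = {}"
proof -
  have "p ! (n + k) \<notin> X" if "k < length p - n" for k
    using first_index_min_cut(2)[OF assms(1,2), of "n + k"] assms(3) that by simp
  then show ?thesis
    by (auto simp: in_set_conv_nth)
qed

lemma min_cut_of_indices:
  assumes "\<And>p. p \<in> P \<Longrightarrow> g p < length p" and cut: "st_cut G s t ((\<lambda>p. p ! g p) ` P)"
  shows "(\<lambda>p. p ! g p) ` P \<in> min_cuts G s t"
    and "\<And>p. p \<in> P \<Longrightarrow> first_index p ((\<lambda>p. p ! g p) ` P) = g p"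
proof -
  show min: "(\<lambda>p. p ! g p) ` P \<in> min_cuts G s t"
    using card_le_card_st_cut[OF paths_edge_disjoint cut] card_image_le[OF finite_paths, of "\<lambda>p. p ! g p"]
      cut by (simp add: min_cuts_iff)
  show "first_index p ((\<lambda>p. p ! g p) ` P) = g p" if "p \<in> P" for p
    using first_index_min_cut(2)[OF min that, of "g p"] assms(1) that by auto
qed

text \<open>The exchange argument: an s-t path q meeting Y before X at the arc q ! i could follow q up
  to that arc and then continue along the path of P through it, missing X altogether.\<close>
lemma first_index_le_apath:
  assumes X: "X \<in> min_cuts G s t" and Y: "Y \<in> min_cuts G s t"
    and le: "\<forall>p\<in>P. first_index p X \<le> first_index p Y" and q: "apath s q t"
  shows "first_index q X \<le> first_index q Y"
proof (rule ccontr)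
  define i where "i = first_index q Y"
  have "set q \<inter> Y \<noteq> {}"
    using Y q by (simp add: min_cuts_iff st_cut_def)
  then have i: "i < length q" "q ! i \<in> Y"
    unfolding i_def by (rule first_index_mem)+
  assume "\<not> first_index q X \<le> first_index q Y"
  then have before: "set (take (Suc i) q) \<inter> X = {}"
    by (intro set_take_first_index_disjoint) (simp add: i_def)
  obtain p where p: "p \<in> P" "q ! i = p ! first_index p Y"
    using Y i(2) by (rule min_cut_memE)
  have "q ! i \<in> set (take (Suc i) q)"
    using i(1) by (simp add: take_Suc_conv_app_nth)
  moreover have "p ! first_index p X \<in> X"
    using first_index_min_cut[OF X p(1)] by simp
  ultimately have "first_index p X \<noteq> first_index p Y"
    using before p(2) by auto
  then have "first_index p X < Suc (first_index p Y)"
    using le p(1) by auto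
  then have after: "set (drop (Suc (first_index p Y)) p) \<inter> X = {}"
    by (rule set_drop_first_index_disjoint[OF X p(1)])
  have "awalk s (take (Suc i) q) (head G (q ! i))"
    using awalk_split_at_arc(1)[OF awalkI_apath[OF q] i(1)] .
  moreover have "awalk (head G (q ! i)) (drop (Suc (first_index p Y)) p) t"
    using awalk_split_at_arc(3)[OF awalkI_apath[OF path_apath[OF p(1)]] first_index_min_cut(1)[OF Y p(1)]]
    unfolding p(2) .
  ultimately have "awalk s (take (Suc i) q @ drop (Suc (first_index p Y)) p) t"
    by (rule awalk_appendI)
  then have "set (take (Suc i) q @ drop (Suc (first_index p Y)) p) \<inter> X \<noteq> {}"
    using X by (intro st_cut_meets_awalk) (simp_all only: min_cuts_iff)
  then show False
    using before after by auto
qed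

lemma cut_le_iff_first_index_le:
  assumes "X \<in> min_cuts G s t" "Y \<in> min_cuts G s t"
  shows "cut_le G s t X Y \<longleftrightarrow> (\<forall>p\<in>P. first_index p X \<le> first_index p Y)"
  unfolding cut_le_def first_index_def[symmetric]
  using path_apath first_index_le_apath[OF assms] by blast

lemma S_max_Un_eq:
  assumes X: "X \<in> min_cuts G s t" and Y: "Y \<in> min_cuts G s t"
  shows "S_max P (X \<union> Y) = (\<lambda>p. p ! max (first_index p X) (first_index p Y)) ` P"
  unfolding S_max_def
proof (rule image_cong[OF refl])
  fix p assume p: "p \<in> P"
  have "(GREATEST i. i < length p \<and> p ! i \<in> X \<union> Y) = max (first_index p X) (first_index p Y)"
    using first_index_min_cut[OF X p] first_index_min_cut[OF Y p]
    by (intro Greatest_equality) (auto simp: max_def)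
  then show "last_on p (X \<union> Y) = p ! max (first_index p X) (first_index p Y)"
    by (simp add: last_on_def)
qed

lemma S_min_Un_eq:
  assumes X: "X \<in> min_cuts G s t" and Y: "Y \<in> min_cuts G s t"
  shows "S_min P (X \<union> Y) = (\<lambda>p. p ! min (first_index p X) (first_index p Y)) ` P"
  unfolding S_min_def
proof (rule image_cong[OF refl])
  fix p assume p: "p \<in> P"
  have "(LEAST i. i < length p \<and> p ! i \<in> X \<union> Y) = min (first_index p X) (first_index p Y)"
    using first_index_min_cut[OF X p] first_index_min_cut[OF Y p]
    by (intro Least_equality) (auto simp: min_def)
  then show "first_on p (X \<union> Y) = p ! min (first_index p X) (first_index p Y)"
    by (simp add: first_on_def)
qed

lemma S_max_Un_subset:
  assumes X: "X \<in> min_cuts G s t" and Y: "Y \<in> min_cuts G s t"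
  shows "S_max P (X \<union> Y) \<subseteq> X \<union> Y"
  using first_index_min_cut[OF X] first_index_min_cut[OF Y]
  by (auto simp: S_max_Un_eq[OF X Y] max_def split: if_splits)

lemma S_min_Un_subset:
  assumes X: "X \<in> min_cuts G s t" and Y: "Y \<in> min_cuts G s t"
  shows "S_min P (X \<union> Y) \<subseteq> X \<union> Y"
  using first_index_min_cut[OF X] first_index_min_cut[OF Y]
  by (auto simp: S_min_Un_eq[OF X Y] min_def split: if_splits)

text \<open>An arc e of X that is not in S_max sits on a path of P strictly before that path's arc of Y,
  so the path itself reaches e while avoiding Y.\<close>
lemma S_max_extend_walk:
  assumes X: "X \<in> min_cuts G s t" and Y: "Y \<in> min_cuts G s t"
    and w: "awalk s w (tail G e)" "set w \<inter> X = {}" and e: "e \<in> arcs G" "e \<notin> S_max P (X \<union> Y)"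
  shows "\<exists>w'. awalk s w' (head G e) \<and> (set w' \<inter> X = {} \<or> set w' \<inter> Y = {})"
proof (cases "e \<in> X")
  case False
  have "awalk s (w @ [e]) (head G e)"
    using w(1) arc_implies_awalk[OF e(1)] by (rule awalk_appendI)
  moreover have "set (w @ [e]) \<inter> X = {}"
    using w(2) False by auto
  ultimately show ?thesis
    by blast
next
  case True
  with X obtain p where p: "p \<in> P" "e = p ! first_index p X"
    by (rule min_cut_memE)
  have "first_index p X < first_index p Y"
  proof (rule ccontr)
    assume "\<not> first_index p X < first_index p Y"
    then have "e = p ! max (first_index p X) (first_index p Y)"
      using p(2) by (simp add: max_def)
    then have "e \<in> S_max P (X \<union> Y)"
      unfolding S_max_Un_eq[OF X Y] using p(1) by (rule image_eqI)
    with e(2) show False ..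
  qed
  then have "set (take (Suc (first_index p X)) p) \<inter> Y = {}"
    by (intro set_take_first_index_disjoint) simp
  moreover have "awalk s (take (Suc (first_index p X)) p) (head G e)"
    using awalk_split_at_arc(1)[OF awalkI_apath[OF path_apath[OF p(1)]] first_index_min_cut(1)[OF X p(1)]]
    unfolding p(2) .
  ultimately show ?thesis
    by blast
qed

lemma S_min_extend_walk:
  assumes X: "X \<in> min_cuts G s t" and Y: "Y \<in> min_cuts G s t"
    and w: "awalk (head G e) w t" "set w \<inter> X = {}" and e: "e \<in> arcs G" "e \<notin> S_min P (X \<union> Y)"
  shows "\<exists>w'. awalk (tail G e) w' t \<and> (set w' \<inter> X = {} \<or> set w' \<inter> Y = {})"
proof (cases "e \<in> X")
  case False
  have "awalk (tail G e) (e # w) t"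
    using w(1) e(1) by (simp add: awalk_Cons_iff)
  moreover have "set (e # w) \<inter> X = {}"
    using w(2) False by auto
  ultimately show ?thesis
    by blast
next
  case True
  with X obtain p where p: "p \<in> P" "e = p ! first_index p X"
    by (rule min_cut_memE)
  have "first_index p Y < first_index p X"
  proof (rule ccontr)
    assume "\<not> first_index p Y < first_index p X"
    then have "e = p ! min (first_index p X) (first_index p Y)"
      using p(2) by (simp add: min_def)
    then have "e \<in> S_min P (X \<union> Y)"
      unfolding S_min_Un_eq[OF X Y] using p(1) by (rule image_eqI)
    with e(2) show False ..
  qed
  then have "set (drop (first_index p X) p) \<inter> Y = {}"
    by (rule set_drop_first_index_disjoint[OF Y p(1)])
  moreover have "awalk (tail G e) (drop (first_index p X) p) t"
    using awalk_split_at_arc(2)[OF awalkI_apath[OF path_apath[OF p(1)]] first_index_min_cut(1)[OF X p(1)]]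
    unfolding p(2) .
  ultimately show ?thesis
    by blast
qed

text \<open>The vertices reachable from s by a walk avoiding X or avoiding Y include s but not t, and
  by S_max_extend_walk no arc outside S_max leaves them; so every s-t path meets S_max.\<close>
lemma st_cut_S_max:
  assumes X: "X \<in> min_cuts G s t" and Y: "Y \<in> min_cuts G s t"
  shows "st_cut G s t (S_max P (X \<union> Y))"
  unfolding st_cut_def
proof (intro conjI allI impI)
  show "S_max P (X \<union> Y) \<subseteq> arcs G"
    using S_max_Un_subset[OF X Y] X Y by (auto simp: min_cuts_iff st_cut_def)
  define R where "R = {v. \<exists>w. awalk s w v \<and> (set w \<inter> X = {} \<or> set w \<inter> Y = {})}"
  fix q assume q: "apath s q t"
  have "s \<in> R"
    using source_in_verts by (auto simp: R_def awalk_Nil_iff intro!: exI[of _ "[]"])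
  moreover have "t \<notin> R"
    using X Y st_cut_meets_awalk by (auto simp: R_def min_cuts_iff)
  ultimately obtain e where e: "e \<in> set q" "tail G e \<in> R" "head G e \<notin> R"
    using q cas_leaves_set[of s q t R] by (auto simp: apath_def awalk_def)
  have "e \<in> arcs G"
    using q e(1) by (auto simp: apath_def awalk_def)
  show "set q \<inter> S_max P (X \<union> Y) \<noteq> {}"
  proof
    assume "set q \<inter> S_max P (X \<union> Y) = {}"
    then have "e \<notin> S_max P (X \<union> Y)" "e \<notin> S_max P (Y \<union> X)"
      using e(1) by (auto simp: Un_commute)
    then have "head G e \<in> R"
      using e(2) S_max_extend_walk[OF X Y _ _ \<open>e \<in> arcs G\<close>] S_max_extend_walk[OF Y X _ _ \<open>e \<in> arcs G\<close>]
      unfolding R_def by blast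
    with e(3) show False ..
  qed
qed

lemma st_cut_S_min:
  assumes X: "X \<in> min_cuts G s t" and Y: "Y \<in> min_cuts G s t"
  shows "st_cut G s t (S_min P (X \<union> Y))"
  unfolding st_cut_def
proof (intro conjI allI impI)
  show "S_min P (X \<union> Y) \<subseteq> arcs G"
    using S_min_Un_subset[OF X Y] X Y by (auto simp: min_cuts_iff st_cut_def)
  define R where "R = {v. \<exists>w. awalk v w t \<and> (set w \<inter> X = {} \<or> set w \<inter> Y = {})}"
  fix q assume q: "apath s q t"
  have "t \<in> R"
    using sink_in_verts by (auto simp: R_def awalk_Nil_iff intro!: exI[of _ "[]"])
  moreover have "s \<notin> R"
    using X Y st_cut_meets_awalk by (auto simp: R_def min_cuts_iff)
  ultimately obtain e where e: "e \<in> set q" "tail G e \<notin> R" "head G e \<in> R"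
    using q cas_leaves_set[of s q t "- R"] by (auto simp: apath_def awalk_def)
  have "e \<in> arcs G"
    using q e(1) by (auto simp: apath_def awalk_def)
  show "set q \<inter> S_min P (X \<union> Y) \<noteq> {}"
  proof
    assume "set q \<inter> S_min P (X \<union> Y) = {}"
    then have "e \<notin> S_min P (X \<union> Y)" "e \<notin> S_min P (Y \<union> X)"
      using e(1) by (auto simp: Un_commute)
    then have "tail G e \<in> R"
      using e(3) S_min_extend_walk[OF X Y _ _ \<open>e \<in> arcs G\<close>] S_min_extend_walk[OF Y X _ _ \<open>e \<in> arcs G\<close>]
      unfolding R_def by blast
    with e(2) show False ..
  qed
qed

lemma S_max_Un_min_cut:
  assumes X: "X \<in> min_cuts G s t" and Y: "Y \<in> min_cuts G s t"
  shows "S_max P (X \<union> Y) \<in> min_cuts G s t"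
    and "p \<in> P \<Longrightarrow> first_index p (S_max P (X \<union> Y)) = max (first_index p X) (first_index p Y)"
  using min_cut_of_indices[of "\<lambda>p. max (first_index p X) (first_index p Y)"]
    st_cut_S_max[OF X Y] first_index_min_cut(1)[OF X] first_index_min_cut(1)[OF Y]
  unfolding S_max_Un_eq[OF X Y] by auto

lemma S_min_Un_min_cut:
  assumes X: "X \<in> min_cuts G s t" and Y: "Y \<in> min_cuts G s t"
  shows "S_min P (X \<union> Y) \<in> min_cuts G s t"
    and "p \<in> P \<Longrightarrow> first_index p (S_min P (X \<union> Y)) = min (first_index p X) (first_index p Y)"
  using min_cut_of_indices[of "\<lambda>p. min (first_index p X) (first_index p Y)"]
    st_cut_S_min[OF X Y] first_index_min_cut(1)[OF X] first_index_min_cut(1)[OF Y]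
  unfolding S_min_Un_eq[OF X Y] by (auto simp: min_less_iff_disj)

end

section \<open>The lattice of ordered tuples of minimum cuts\<close>

lemma least_Upper_pairI:
  fixes L (structure)
  assumes "x \<in> carrier L" "y \<in> carrier L" "j \<in> carrier L" "x \<sqsubseteq> j" "y \<sqsubseteq> j"
    and "\<And>z. z \<in> carrier L \<Longrightarrow> x \<sqsubseteq> z \<Longrightarrow> y \<sqsubseteq> z \<Longrightarrow> j \<sqsubseteq> z"
  shows "least L j (Upper L {x, y})"
  using assms by (intro least_UpperI) (auto simp: Upper_def)

lemma greatest_Lower_pairI:
  fixes L (structure)
  assumes "x \<in> carrier L" "y \<in> carrier L" "m \<in> carrier L" "m \<sqsubseteq> x" "m \<sqsubseteq> y"
    and "\<And>z. z \<in> carrier L \<Longrightarrow> z \<sqsubseteq> x \<Longrightarrow> z \<sqsubseteq> y \<Longrightarrow> z \<sqsubseteq> m"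
  shows "greatest L m (Lower L {x, y})"
  using assms by (intro greatest_LowerI) (auto simp: Lower_def)

lemma (in partial_order) join_eq_least: "least L j (Upper L {x, y}) \<Longrightarrow> x \<squnion> y = j"
  unfolding join_def sup_def by (rule some_equality) (auto intro: least_unique)

lemma (in partial_order) meet_eq_greatest: "greatest L m (Lower L {x, y}) \<Longrightarrow> x \<sqinter> y = m"
  unfolding meet_def inf_def by (rule some_equality) (auto intro: greatest_unique)

context max_st_paths
begin

lemma U_lr_iff:
  "C \<in> U_lr G s t k \<longleftrightarrow> length C = k \<and> (\<forall>i<k. C ! i \<in> min_cuts G s t) \<and>
    (\<forall>i j. i < j \<and> j < k \<longrightarrow> (\<forall>p\<in>P. first_index p (C ! i) \<le> first_index p (C ! j)))"
proof -
  have cuts: "set C \<subseteq> min_cuts G s t \<longleftrightarrow> (\<forall>i<length C. C ! i \<in> min_cuts G s t)"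
    by (simp only: subset_eq all_set_conv_all_nth)
  have "cut_le G s t (C ! i) (C ! j) \<longleftrightarrow> (\<forall>p\<in>P. first_index p (C ! i) \<le> first_index p (C ! j))"
    if "\<forall>i<length C. C ! i \<in> min_cuts G s t" "i < j" "j < length C" for i j
    using that by (intro cut_le_iff_first_index_le) auto
  then show ?thesis
    unfolding U_lr_def mem_Collect_eq cuts by (intro conj_cong refl) auto
qed

lemma tuple_le_iff:
  assumes "C \<in> U_lr G s t k" "D \<in> U_lr G s t k"
  shows "tuple_le G s t k C D \<longleftrightarrow> (\<forall>i<k. \<forall>p\<in>P. first_index p (C ! i) \<le> first_index p (D ! i))"
  using assms by (auto simp: tuple_le_def U_lr_iff cut_le_iff_first_index_le)

lemma U_lr_eqI:
  assumes "C \<in> U_lr G s t k" "D \<in> U_lr G s t k"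
    and "\<And>i p. i < k \<Longrightarrow> p \<in> P \<Longrightarrow> first_index p (C ! i) = first_index p (D ! i)"
  shows "C = D"
proof (rule nth_equalityI)
  show "length C = length D"
    using assms by (simp add: U_lr_iff)
  fix i assume "i < length C"
  then show "C ! i = D ! i"
    using assms by (intro min_cuts_eqI) (auto simp: U_lr_iff)
qed

lemma map2_in_U_lr:
  assumes C: "C \<in> U_lr G s t k" and D: "D \<in> U_lr G s t k"
    and closed: "\<And>X Y. X \<in> min_cuts G s t \<Longrightarrow> Y \<in> min_cuts G s t \<Longrightarrow> h X Y \<in> min_cuts G s t"
    and index: "\<And>X Y p. X \<in> min_cuts G s t \<Longrightarrow> Y \<in> min_cuts G s t \<Longrightarrow> p \<in> P \<Longrightarrow>
      first_index p (h X Y) = f (first_index p X) (first_index p Y)"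
    and mono: "\<And>a b c d. a \<le> c \<Longrightarrow> b \<le> d \<Longrightarrow> f a b \<le> f c d"
  shows "map2 h C D \<in> U_lr G s t k"
    and "\<And>i p. i < k \<Longrightarrow> p \<in> P \<Longrightarrow>
      first_index p (map2 h C D ! i) = f (first_index p (C ! i)) (first_index p (D ! i))"
  using C D by (auto simp: U_lr_iff closed index intro!: mono)

abbreviation tuple_sup :: "'e set list \<Rightarrow> 'e set list \<Rightarrow> 'e set list" where
  "tuple_sup C D \<equiv> map2 (\<lambda>X Y. S_max P (X \<union> Y)) C D"

abbreviation tuple_inf :: "'e set list \<Rightarrow> 'e set list \<Rightarrow> 'e set list" where
  "tuple_inf C D \<equiv> map2 (\<lambda>X Y. S_min P (X \<union> Y)) C D"

lemma tuple_sup_in_U_lr: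
  assumes "C \<in> U_lr G s t k" "D \<in> U_lr G s t k"
  shows "tuple_sup C D \<in> U_lr G s t k"
    and "i < k \<Longrightarrow> p \<in> P \<Longrightarrow>
      first_index p (tuple_sup C D ! i) = max (first_index p (C ! i)) (first_index p (D ! i))"
  using map2_in_U_lr[where h = "\<lambda>X Y. S_max P (X \<union> Y)" and f = max,
      OF assms S_max_Un_min_cut(1) S_max_Un_min_cut(2) max.mono]
  by simp_all

lemma tuple_inf_in_U_lr:
  assumes "C \<in> U_lr G s t k" "D \<in> U_lr G s t k"
  shows "tuple_inf C D \<in> U_lr G s t k"
    and "i < k \<Longrightarrow> p \<in> P \<Longrightarrow>
      first_index p (tuple_inf C D ! i) = min (first_index p (C ! i)) (first_index p (D ! i))"
  using map2_in_U_lr[where h = "\<lambda>X Y. S_min P (X \<union> Y)" and f = min,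
      OF assms S_min_Un_min_cut(1) S_min_Un_min_cut(2) min.mono]
  by simp_all

lemma partial_order_L_star: "partial_order (L_star G s t k)"
proof (unfold_locales, simp_all add: L_star_def)
  fix x y assume "x \<in> U_lr G s t k" "y \<in> U_lr G s t k" "tuple_le G s t k x y" "tuple_le G s t k y x"
  then show "x = y"
    using tuple_le_iff by (intro U_lr_eqI) (auto intro: order.antisym)
next
  fix x assume "x \<in> U_lr G s t k"
  then show "tuple_le G s t k x x"
    by (simp add: tuple_le_iff)
next
  fix x y z assume "x \<in> U_lr G s t k" "y \<in> U_lr G s t k" "z \<in> U_lr G s t k"
    "tuple_le G s t k x y" "tuple_le G s t k y z"
  then show "tuple_le G s t k x z"
    using tuple_le_iff by (meson order.trans)
qed

lemma least_Upper_tuple_sup: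
  assumes "C \<in> U_lr G s t k" "D \<in> U_lr G s t k"
  shows "least (L_star G s t k) (tuple_sup C D) (Upper (L_star G s t k) {C, D})"
  using assms tuple_sup_in_U_lr[OF assms]
  by (intro least_Upper_pairI) (auto simp: L_star_def tuple_le_iff)

lemma greatest_Lower_tuple_inf:
  assumes "C \<in> U_lr G s t k" "D \<in> U_lr G s t k"
  shows "greatest (L_star G s t k) (tuple_inf C D) (Lower (L_star G s t k) {C, D})"
  using assms tuple_inf_in_U_lr[OF assms]
  by (intro greatest_Lower_pairI) (auto simp: L_star_def tuple_le_iff)

lemma join_L_star:
  "C \<in> U_lr G s t k \<Longrightarrow> D \<in> U_lr G s t k \<Longrightarrow> C \<squnion>\<^bsub>L_star G s t k\<^esub> D = tuple_sup C D"
  by (rule partial_order.join_eq_least[OF partial_order_L_star least_Upper_tuple_sup])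

lemma meet_L_star:
  "C \<in> U_lr G s t k \<Longrightarrow> D \<in> U_lr G s t k \<Longrightarrow> C \<sqinter>\<^bsub>L_star G s t k\<^esub> D = tuple_inf C D"
  by (rule partial_order.meet_eq_greatest[OF partial_order_L_star greatest_Lower_tuple_inf])

lemma lattice_L_star: "lattice (L_star G s t k)"
proof (rule lattice.intro)
  show "upper_semilattice (L_star G s t k)"
    by (rule upper_semilattice.intro[OF partial_order_L_star])
      (unfold_locales, use least_Upper_tuple_sup in \<open>auto simp: L_star_def\<close>)
  show "lower_semilattice (L_star G s t k)"
    by (rule lower_semilattice.intro[OF partial_order_L_star])
      (unfold_locales, use greatest_Lower_tuple_inf in \<open>auto simp: L_star_def\<close>)
qed

text \<open>Join and meet act on each path of P by max and min of the positions of the cuts,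
  so distributivity is inherited from that of max and min on the naturals.\<close>
lemma distributive_lattice_L_star: "distributive_lattice (L_star G s t k)"
  unfolding distributive_lattice_def
proof (intro conjI ballI lattice_L_star)
  fix x y z
  assume "x \<in> carrier (L_star G s t k)" "y \<in> carrier (L_star G s t k)" "z \<in> carrier (L_star G s t k)"
  then have x: "x \<in> U_lr G s t k" and y: "y \<in> U_lr G s t k" and z: "z \<in> U_lr G s t k"
    by (simp_all add: L_star_def)
  note sup = tuple_sup_in_U_lr and inf = tuple_inf_in_U_lr
  have "tuple_inf x (tuple_sup y z) = tuple_sup (tuple_inf x y) (tuple_inf x z)"
  proof (rule U_lr_eqI)
    show "tuple_inf x (tuple_sup y z) \<in> U_lr G s t k"
      "tuple_sup (tuple_inf x y) (tuple_inf x z) \<in> U_lr G s t k"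
      using x y z by (intro inf(1) sup(1); simp)+
    fix i p assume i: "i < k" and p: "p \<in> P"
    have "first_index p (tuple_inf x (tuple_sup y z) ! i) =
        min (first_index p (x ! i)) (max (first_index p (y ! i)) (first_index p (z ! i)))"
      using inf(2)[OF x sup(1)[OF y z] i p] sup(2)[OF y z i p] by simp
    also have "\<dots> = max (min (first_index p (x ! i)) (first_index p (y ! i)))
        (min (first_index p (x ! i)) (first_index p (z ! i)))"
      by (rule min_max_distrib2)
    also have "\<dots> = first_index p (tuple_sup (tuple_inf x y) (tuple_inf x z) ! i)"
      using sup(2)[OF inf(1)[OF x y] inf(1)[OF x z] i p] inf(2)[OF x y i p] inf(2)[OF x z i p] by simp
    finally show "first_index p (tuple_inf x (tuple_sup y z) ! i) =
        first_index p (tuple_sup (tuple_inf x y) (tuple_inf x z) ! i)" .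
  qed
  then show "x \<sqinter>\<^bsub>L_star G s t k\<^esub> (y \<squnion>\<^bsub>L_star G s t k\<^esub> z) =
      (x \<sqinter>\<^bsub>L_star G s t k\<^esub> y) \<squnion>\<^bsub>L_star G s t k\<^esub> (x \<sqinter>\<^bsub>L_star G s t k\<^esub> z)"
    using x y z sup inf by (simp add: join_L_star meet_L_star)
qed

end

theorem lemma2:
  fixes G :: "('v,'e) pre_digraph" and s t :: 'v and k :: nat and P :: "'e list set"
  assumes "fin_digraph G"
    and "s \<in> verts G" and "t \<in> verts G" and "s \<noteq> t"
    and "k \<ge> 1"
    and "max_edge_disjoint_paths G s t P"
  shows "distributive_lattice (L_star G s t k) \<and>
    (\<forall>C1\<in>U_lr G s t k. \<forall>C2\<in>U_lr G s t k.
       C1 \<squnion>\<^bsub>L_star G s t k\<^esub> C2 = map2 (\<lambda>X Y. S_max P (X \<union> Y)) C1 C2 \<and>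
       C1 \<sqinter>\<^bsub>L_star G s t k\<^esub> C2 = map2 (\<lambda>X Y. S_min P (X \<union> Y)) C1 C2)"
proof -
  interpret max_st_paths G s t P
    using assms by (simp add: max_st_paths_def max_st_paths_axioms_def st_digraph_def st_digraph_axioms_def)
  show ?thesis
    using distributive_lattice_L_star join_L_star meet_L_star by blast
qed

end
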